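(* Let $(Z_{m,n})_{m,n\in\mathbb N}$ be a family of real-valued random variables on a probability space with $|Z_{m,n}|\le1$ and $\mathbb E(Z_{m,n})=0$ for all $m,n$, such that for each fixed $m$ the random variables $(Z_{m,n})_{n\ge1}$ are independent. Let $(\rho_n)$ be positive numbers with $\sup_{m\in\mathbb N}\mathrm{Var}(Z_{m,n})\le\rho_n$ for every $n$ and $\lim_{N\to\infty}\frac1{\log N}\sum_{n=1}^N\rho_n=+\infty$. Then almost surely there is a constant $C_\omega$ such that for all $N\ge2$, $$\max_{1\le m\le N}\max_{t\in[0,1]}\Bigl|\sum_{n=1}^N Z_{m,n}\,e(nt)\Bigr|\le C_\omega\sqrt{\log N\cdot\sum_{n=1}^N\rho_n}.$$
   Context: $e(t)=e^{2\pi i t}$. *)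

theory Defs
  imports "HOL-Probability.Probability"
begin

definition e :: "real \<Rightarrow> complex" where
  "e t = exp (2 * complex_of_real pi * \<i> * complex_of_real t)"

end

theory Submission
  imports Defs
begin

text \<open>
  Write \<open>P\<^sub>m(t) = \<Sum>n\<le>N. Z m n \<omega> e(nt)\<close> and \<open>R N = \<Sum>n\<le>N. \<rho> n\<close>.  The proof has three parts.
  (1) Deterministic: a trigonometric polynomial of degree \<open>N\<close> with coefficients in
      \<open>[-1,1]\<close> is \<open>2\<pi>N\<^sup>2\<close>-Lipschitz, so its sup norm on \<open>[0,1]\<close> is controlled by the
      real and imaginary parts of its values on the grid \<open>j/N\<^sup>3\<close>, up to an error \<open>2\<pi>/N\<close>.
  (2) Probabilistic: a Bernstein-type Chernoff bound \<open>E exp(cX) \<le> exp(c\<^sup>2 Var X)\<close> for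
      \<open>|c| \<le> 1\<close> gives, for \<open>9 ln N \<le> R N\<close>, that a weighted sum \<open>\<Sum> a\<^sub>n Z m n\<close> with
      \<open>|a\<^sub>n| \<le> 1\<close> exceeds \<open>6\<surd>(ln N R N)\<close> in absolute value with probability \<open>\<le> 2 N\<^sup>-\<^sup>9\<close>.
      A union bound over \<open>m \<le> N\<close>, the \<open>N\<^sup>3 + 1\<close> grid points and cosine/sine shows
      that the "bad event" at level \<open>N\<close> has probability \<open>\<le> 8/N\<^sup>2\<close>.
  (3) Borel--Cantelli: almost surely only finitely many bad events occur, so the bound
      \<open>19\<surd>(ln N R N)\<close> holds for all large \<open>N\<close>; the trivial bound \<open>|P\<^sub>m(t)| \<le> N\<close>
      handles the finitely many remaining \<open>N\<close>.
\<close>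

definition trig_poly :: "(nat \<Rightarrow> real) \<Rightarrow> nat \<Rightarrow> real \<Rightarrow> complex" where
  "trig_poly c N t = (\<Sum>n=1..N. complex_of_real (c n) * e (real n * t))"

lemma e_cis: "e x = cis (2 * pi * x)"
  unfolding e_def by (simp add: cis_conv_exp mult_ac)

lemma norm_cis_diff_le: "norm (cis a - cis b) \<le> \<bar>a - b\<bar>"
proof -
  define y where "y = (a - b) / 2"
  have "cis (b + y) * cis y = cis a" "cis (b + y) * cis (- y) = cis b"
    by (simp_all add: cis_mult y_def)
  then have "cis a - cis b = cis (b + y) * (cis y - cis (- y))"
    by (simp add: right_diff_distrib)
  also have "cis y - cis (- y) = 2 * \<i> * complex_of_real (sin y)"
    by (simp add: complex_eq_iff)
  finally have "norm (cis a - cis b) = 2 * \<bar>sin y\<bar>"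
    by (simp add: norm_mult)
  also have "\<dots> \<le> 2 * \<bar>y\<bar>"
    using abs_sin_x_le_abs_x by simp
  finally show ?thesis
    by (simp add: y_def)
qed

lemma norm_e_diff_le: "norm (e a - e b) \<le> 2 * pi * \<bar>a - b\<bar>"
  using norm_cis_diff_le[of "2 * pi * a" "2 * pi * b"]
  by (simp add: e_cis abs_mult flip: right_diff_distrib)

lemma trig_poly_norm_le:
  assumes "\<And>n. n \<in> {1..N} \<Longrightarrow> \<bar>c n\<bar> \<le> 1"
  shows "norm (trig_poly c N t) \<le> real N"
proof -
  have "norm (trig_poly c N t) \<le> (\<Sum>n=1..N. norm (complex_of_real (c n) * e (real n * t)))"
    unfolding trig_poly_def by (rule norm_sum)
  also have "\<dots> \<le> (\<Sum>n=1..N. 1)"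
    by (rule sum_mono) (simp add: norm_mult e_cis assms)
  finally show ?thesis by simp
qed

lemma trig_poly_lipschitz:
  assumes "\<And>n. n \<in> {1..N} \<Longrightarrow> \<bar>c n\<bar> \<le> 1"
  shows "norm (trig_poly c N t - trig_poly c N s) \<le> 2 * pi * real N ^ 2 * \<bar>t - s\<bar>"
proof -
  have "norm (trig_poly c N t - trig_poly c N s)
        \<le> (\<Sum>n=1..N. norm (complex_of_real (c n) * (e (real n * t) - e (real n * s))))"
    unfolding trig_poly_def by (simp add: algebra_simps norm_sum flip: sum_subtractf)
  also have "\<dots> \<le> (\<Sum>n=1..N. 2 * pi * real N * \<bar>t - s\<bar>)"
  proof (rule sum_mono)
    fix n assume n: "n \<in> {1..N}"
    have "norm (complex_of_real (c n) * (e (real n * t) - e (real n * s)))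
          \<le> 1 * (2 * pi * \<bar>real n * t - real n * s\<bar>)"
      unfolding norm_mult norm_of_real using assms[OF n] norm_e_diff_le
      by (intro mult_mono) auto
    also have "\<dots> \<le> 2 * pi * real N * \<bar>t - s\<bar>"
      using n by (simp add: abs_mult mult_right_mono flip: right_diff_distrib)
    finally show "norm (complex_of_real (c n) * (e (real n * t) - e (real n * s)))
                  \<le> 2 * pi * real N * \<bar>t - s\<bar>" .
  qed
  finally show ?thesis
    by (simp add: power2_eq_square mult_ac)
qed

lemma trig_poly_re_im:
  "norm (trig_poly c N s) \<le> \<bar>\<Sum>n=1..N. c n * cos (2 * pi * (real n * s))\<bar>
                             + \<bar>\<Sum>n=1..N. c n * sin (2 * pi * (real n * s))\<bar>"
    (is "_ \<le> \<bar>?A\<bar> + \<bar>?B\<bar>")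
proof -
  have "complex_of_real (c n) * e (real n * s)
        = complex_of_real (c n * cos (2 * pi * (real n * s)))
          + \<i> * complex_of_real (c n * sin (2 * pi * (real n * s)))" for n
    by (simp add: e_cis complex_eq_iff)
  then have decomp: "trig_poly c N s = complex_of_real ?A + \<i> * complex_of_real ?B"
    unfolding trig_poly_def by (simp add: sum.distrib sum_distrib_left)
  have "norm (trig_poly c N s) \<le> norm (complex_of_real ?A) + norm (\<i> * complex_of_real ?B)"
    unfolding decomp by (rule norm_triangle_ineq)
  then show ?thesis
    by (simp only: norm_mult norm_ii norm_of_real mult_1)
qed

lemma grid_point_near:
  assumes "t \<in> {0..1}" and "K > 0"
  obtains j :: nat where "j \<le> K" and "\<bar>t - real j / real K\<bar> \<le> 1 / real K"
proof -
  define j where "j = nat \<lfloor>t * real K\<rfloor>"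
  have j: "real j = of_int \<lfloor>t * real K\<rfloor>"
    unfolding j_def using assms by simp
  have "t * real K \<le> real K"
    using assms by (simp add: mult_left_le_one_le)
  then have "j \<le> K"
    unfolding j_def by (simp add: nat_le_iff floor_le_iff)
  have "\<bar>t * real K - real j\<bar> \<le> 1"
    unfolding j by linarith
  moreover have "t - real j / real K = (t * real K - real j) / real K"
    using assms by (simp add: field_simps)
  ultimately have "\<bar>t - real j / real K\<bar> \<le> 1 / real K"
    using assms by (simp add: divide_right_mono abs_divide)
  with \<open>j \<le> K\<close> show thesis
    by (rule that)
qed

lemma trig_poly_bound_from_grid:
  assumes coeff: "\<And>n. n \<in> {1..N} \<Longrightarrow> \<bar>c n\<bar> \<le> 1" and "K > 0"
    and grid: "\<And>j. j \<le> K \<Longrightarrow>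
               \<bar>\<Sum>n=1..N. c n * cos (2 * pi * (real n * (real j / real K)))\<bar> \<le> x \<and>
               \<bar>\<Sum>n=1..N. c n * sin (2 * pi * (real n * (real j / real K)))\<bar> \<le> x"
    and t: "t \<in> {0..1}"
  shows "norm (trig_poly c N t) \<le> 2 * x + 2 * pi * real N ^ 2 / real K"
proof -
  obtain j where j: "j \<le> K" "\<bar>t - real j / real K\<bar> \<le> 1 / real K"
    using grid_point_near[OF t \<open>K > 0\<close>] .
  define s where "s = real j / real K"
  have "norm (trig_poly c N s) \<le> 2 * x"
    using trig_poly_re_im[of c N s] grid[OF j(1)] unfolding s_def by linarith
  moreover have "norm (trig_poly c N t - trig_poly c N s) \<le> 2 * pi * real N ^ 2 * \<bar>t - s\<bar>"
    by (rule trig_poly_lipschitz[OF coeff])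
  moreover have "2 * pi * real N ^ 2 * \<bar>t - s\<bar> \<le> 2 * pi * real N ^ 2 * (1 / real K)"
    using j(2) unfolding s_def by (intro mult_left_mono) auto
  moreover have "norm (trig_poly c N t) \<le> norm (trig_poly c N s) + norm (trig_poly c N t - trig_poly c N s)"
    by (rule norm_triangle_sub)
  ultimately show ?thesis
    by simp
qed

lemma uniform_bound_from_eventual:
  fixes f :: "nat \<Rightarrow> 'b \<Rightarrow> real" and g B :: "nat \<Rightarrow> real"
  assumes ev: "eventually (\<lambda>N. \<forall>i\<in>I N. f N i \<le> c * g N) sequentially"
    and crude: "\<And>N i. N \<ge> 2 \<Longrightarrow> i \<in> I N \<Longrightarrow> f N i \<le> B N"
    and pos: "\<And>N. N \<ge> 2 \<Longrightarrow> g N > 0"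
  shows "\<exists>C. \<forall>N\<ge>2. \<forall>i\<in>I N. f N i \<le> C * g N"
proof -
  obtain N0 where N0: "\<And>N i. N \<ge> N0 \<Longrightarrow> i \<in> I N \<Longrightarrow> f N i \<le> c * g N"
    using ev by (auto simp: eventually_sequentially)
  define C where "C = \<bar>c\<bar> + (\<Sum>k\<in>{2..<N0}. \<bar>B k\<bar> / g k)"
  have initial_part_nonneg: "0 \<le> (\<Sum>k\<in>{2..<N0}. \<bar>B k\<bar> / g k)"
    using pos by (intro sum_nonneg) (simp add: less_imp_le)
  have "f N i \<le> C * g N" if N: "N \<ge> 2" and i: "i \<in> I N" for N i
  proof (cases "N < N0")
    case True
    have "\<bar>B N\<bar> / g N \<le> (\<Sum>k\<in>{2..<N0}. \<bar>B k\<bar> / g k)"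
      using True N pos by (intro member_le_sum) (auto simp: less_imp_le)
    then have "B N / g N \<le> C"
      unfolding C_def using pos[OF N] by (smt (verit) divide_right_mono)
    then show ?thesis
      using crude[OF N i] pos[OF N] by (simp add: pos_divide_le_eq)
  next
    case False
    have "c * g N \<le> C * g N"
      unfolding C_def using initial_part_nonneg pos[OF N] by (intro mult_right_mono) auto
    then show ?thesis
      using N0[OF _ i] False by force
  qed
  then show ?thesis
    by blast
qed

lemma exp_le_quadratic:
  fixes y :: real
  assumes "\<bar>y\<bar> \<le> 1"
  shows "exp y \<le> 1 + y + y\<^sup>2"
proof (cases "y \<ge> 0")
  case True
  then show ?thesis
    using exp_bound[of y] assms by auto
next
  case False
  have "1 - y \<le> exp (- y)"
    using exp_ge_add_one_self[of "- y"] by simp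
  then have "exp y \<le> 1 / (1 - y)"
    using False by (simp add: exp_minus field_simps)
  also have "\<dots> \<le> 1 + y + y\<^sup>2"
  proof -
    have "y * (y * y) \<le> 0"
      using False by (simp add: mult_nonpos_nonneg)
    then have "1 \<le> (1 - y) * (1 + y + y\<^sup>2)"
      by (simp add: algebra_simps power2_eq_square)
    then show ?thesis
      using False by (simp add: divide_simps mult.commute)
  qed
  finally show ?thesis .
qed

text \<open>Moment generating function of a centered variable bounded by 1: for \<open>|c| \<le> 1\<close>,
  \<open>E exp(cX) \<le> 1 + c\<^sup>2 Var X \<le> exp(c\<^sup>2 Var X)\<close>.\<close>
lemma (in prob_space) mgf_le_exp_variance:
  fixes X :: "'a \<Rightarrow> real"
  assumes [measurable]: "X \<in> borel_measurable M"
    and bounded: "\<And>x. x \<in> space M \<Longrightarrow> \<bar>X x\<bar> \<le> 1"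
    and centered: "expectation X = 0" and c: "\<bar>c\<bar> \<le> 1"
  shows "(\<integral>\<^sup>+x. ennreal (exp (c * X x)) \<partial>M) \<le> ennreal (exp (c\<^sup>2 * variance X))"
proof -
  have cX: "\<bar>c * X x\<bar> \<le> 1" if "x \<in> space M" for x
    using mult_mono[OF c bounded[OF that]] by (simp add: abs_mult)
  have int_exp: "integrable M (\<lambda>x. exp (c * X x))"
    by (rule integrable_const_bound[where B="exp 1"])
       (use cX in \<open>auto intro!: AE_I2 dest!: abs_le_D1\<close>)
  have int_X: "integrable M X"
    by (rule integrable_const_bound[where B=1]) (use bounded in auto)
  have int_X2: "integrable M (\<lambda>x. (X x)\<^sup>2)"
    by (rule integrable_const_bound[where B=1])
       (use bounded in \<open>auto intro!: AE_I2 simp: abs_square_le_1\<close>)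
  have "(\<integral>x. exp (c * X x) \<partial>M) \<le> (\<integral>x. 1 + c * X x + c\<^sup>2 * (X x)\<^sup>2 \<partial>M)"
    using int_X int_X2 exp_le_quadratic[OF cX]
    by (intro integral_mono[OF int_exp]) (auto simp: power_mult_distrib)
  also have "\<dots> = 1 + c\<^sup>2 * variance X"
    using int_X int_X2 centered by (simp add: prob_space)
  also have "\<dots> \<le> exp (c\<^sup>2 * variance X)"
    by (rule exp_ge_add_one_self)
  finally show ?thesis
    using int_exp by (simp add: nn_integral_eq_integral ennreal_leI)
qed

text \<open>Bernstein-type tail bound for a weighted sum of independent centered variables,
  obtained from Chernoff's inequality and multiplicativity of the moment generating function.\<close>
lemma (in prob_space) weighted_sum_tail:
  fixes X :: "nat \<Rightarrow> 'a \<Rightarrow> real" and I :: "nat set"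
  assumes fin: "finite I" and indep: "indep_vars (\<lambda>_. borel) X I"
    and bounded: "\<And>i x. i \<in> I \<Longrightarrow> x \<in> space M \<Longrightarrow> \<bar>X i x\<bar> \<le> 1"
    and centered: "\<And>i. i \<in> I \<Longrightarrow> expectation (X i) = 0"
    and var: "\<And>i. i \<in> I \<Longrightarrow> variance (X i) \<le> v i"
    and weights: "\<And>i. i \<in> I \<Longrightarrow> \<bar>a i\<bar> \<le> 1"
    and l: "0 < l" "l \<le> 1"
  shows "prob {x\<in>space M. c \<le> (\<Sum>i\<in>I. a i * X i x)} \<le> exp (l\<^sup>2 * (\<Sum>i\<in>I. v i) - l * c)"
proof -
  have rv[measurable]: "i \<in> I \<Longrightarrow> random_variable borel (X i)" for i
    using indep unfolding indep_vars_def by blast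
  have mgf_i: "(\<integral>\<^sup>+x. ennreal (exp (l * a i * X i x)) \<partial>M) \<le> ennreal (exp (l\<^sup>2 * v i))"
    if i: "i \<in> I" for i
  proof -
    have la: "\<bar>l * a i\<bar> \<le> l"
      using weights[OF i] l by (simp add: abs_mult mult_left_le)
    then have "(l * a i)\<^sup>2 \<le> l\<^sup>2"
      using l by (metis abs_le_square_iff abs_of_pos)
    then have "(l * a i)\<^sup>2 * variance (X i) \<le> l\<^sup>2 * v i"
      using var[OF i] variance_positive by (intro mult_mono) auto
    then show ?thesis
      using order_trans[OF mgf_le_exp_variance[OF rv[OF i] bounded[OF i] centered[OF i]]] la l
      by (auto intro!: ennreal_leI)
  qed
  have "ennreal (prob {x\<in>space M. c \<le> (\<Sum>i\<in>I. a i * X i x)})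
        \<le> ennreal (exp (- l * c))
          * (\<integral>\<^sup>+x. ennreal (exp (l * (\<Sum>i\<in>I. a i * X i x))) * indicator (space M) x \<partial>M)"
    unfolding emeasure_eq_measure[symmetric]
    by (rule Chernoff_ineq_nn_integral_ge[OF l(1)]) auto
  also have "(\<integral>\<^sup>+x. ennreal (exp (l * (\<Sum>i\<in>I. a i * X i x))) * indicator (space M) x \<partial>M)
             = (\<Prod>i\<in>I. \<integral>\<^sup>+x. ennreal (exp (l * a i * X i x)) \<partial>M)"
  proof -
    have "(\<integral>\<^sup>+x. ennreal (exp (l * (\<Sum>i\<in>I. a i * X i x))) * indicator (space M) x \<partial>M)
          = (\<integral>\<^sup>+x. (\<Prod>i\<in>I. ennreal (exp (l * a i * X i x))) \<partial>M)"
      by (intro nn_integral_cong)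
         (simp_all add: sum_distrib_left exp_sum fin prod_ennreal mult.assoc)
    also have "\<dots> = (\<Prod>i\<in>I. \<integral>\<^sup>+x. ennreal (exp (l * a i * X i x)) \<partial>M)"
      by (intro indep_vars_nn_integral fin indep_vars_compose2[OF indep]) auto
    finally show ?thesis .
  qed
  also have "ennreal (exp (- l * c)) * \<dots> \<le> ennreal (exp (- l * c)) * (\<Prod>i\<in>I. ennreal (exp (l\<^sup>2 * v i)))"
    by (intro mult_left_mono prod_mono_ennreal mgf_i) auto
  also have "\<dots> = ennreal (exp (- l * c) * (\<Prod>i\<in>I. exp (l\<^sup>2 * v i)))"
    by (simp add: prod_ennreal prod_nonneg flip: ennreal_mult)
  also have "exp (- l * c) * (\<Prod>i\<in>I. exp (l\<^sup>2 * v i)) = exp (l\<^sup>2 * (\<Sum>i\<in>I. v i) - l * c)"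
    by (simp add: exp_diff exp_minus sum_distrib_left exp_sum fin field_simps)
       (simp add: sum_distrib_right exp_sum fin)
  finally show ?thesis
    by (subst (asm) ennreal_le_iff) simp_all
qed

text \<open>The two-sided version, applying the one-sided bound to the weights \<open>a\<close> and \<open>-a\<close>.\<close>
lemma (in prob_space) abs_weighted_sum_tail:
  fixes X :: "nat \<Rightarrow> 'a \<Rightarrow> real" and I :: "nat set"
  assumes fin: "finite I" and indep: "indep_vars (\<lambda>_. borel) X I"
    and bounded: "\<And>i x. i \<in> I \<Longrightarrow> x \<in> space M \<Longrightarrow> \<bar>X i x\<bar> \<le> 1"
    and centered: "\<And>i. i \<in> I \<Longrightarrow> expectation (X i) = 0"
    and var: "\<And>i. i \<in> I \<Longrightarrow> variance (X i) \<le> v i"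
    and weights: "\<And>i. i \<in> I \<Longrightarrow> \<bar>a i\<bar> \<le> 1"
    and l: "0 < l" "l \<le> 1"
  shows "prob {x\<in>space M. c \<le> \<bar>\<Sum>i\<in>I. a i * X i x\<bar>} \<le> 2 * exp (l\<^sup>2 * (\<Sum>i\<in>I. v i) - l * c)"
proof -
  have [measurable]: "i \<in> I \<Longrightarrow> random_variable borel (X i)" for i
    using indep unfolding indep_vars_def by blast
  define upper where "upper b = {x\<in>space M. c \<le> (\<Sum>i\<in>I. b i * X i x)}" for b :: "nat \<Rightarrow> real"
  have upper_sets: "upper b \<in> events" for b
    unfolding upper_def by measurable
  have "{x\<in>space M. c \<le> \<bar>\<Sum>i\<in>I. a i * X i x\<bar>} \<subseteq> upper a \<union> upper (\<lambda>i. - a i)"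
    unfolding upper_def by (auto simp: sum_negf abs_if split: if_splits)
  then have "prob {x\<in>space M. c \<le> \<bar>\<Sum>i\<in>I. a i * X i x\<bar>} \<le> prob (upper a) + prob (upper (\<lambda>i. - a i))"
    using upper_sets by (meson finite_measure_mono measure_Un_le order_trans sets.Un)
  also have "\<dots> \<le> 2 * exp (l\<^sup>2 * (\<Sum>i\<in>I. v i) - l * c)"
    using weighted_sum_tail[OF fin indep bounded centered var, of a l c]
          weighted_sum_tail[OF fin indep bounded centered var, of "\<lambda>i. - a i" l c]
    using weights l unfolding upper_def by simp
  finally show ?thesis .
qed

locale bounded_centered_rows = prob_space +
  fixes Z :: "nat \<Rightarrow> nat \<Rightarrow> 'a \<Rightarrow> real" and \<rho> :: "nat \<Rightarrow> real"
  assumes rv: "\<And>m n. m \<ge> 1 \<Longrightarrow> n \<ge> 1 \<Longrightarrow> Z m n \<in> borel_measurable M"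
    and bounded: "\<And>m n \<omega>. m \<ge> 1 \<Longrightarrow> n \<ge> 1 \<Longrightarrow> \<omega> \<in> space M \<Longrightarrow> \<bar>Z m n \<omega>\<bar> \<le> 1"
    and centered: "\<And>m n. m \<ge> 1 \<Longrightarrow> n \<ge> 1 \<Longrightarrow> expectation (Z m n) = 0"
    and indep: "\<And>m. m \<ge> 1 \<Longrightarrow> indep_vars (\<lambda>_. borel) (\<lambda>n. Z m n) {1..}"
    and var: "\<And>m n. m \<ge> 1 \<Longrightarrow> n \<ge> 1 \<Longrightarrow> variance (Z m n) \<le> \<rho> n"
begin

definition threshold :: "nat \<Rightarrow> real" where
  "threshold N = 6 * sqrt (ln (real N) * (\<Sum>n=1..N. \<rho> n))"

definition grid_coeff :: "bool \<Rightarrow> nat \<Rightarrow> nat \<Rightarrow> nat \<Rightarrow> real" where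
  "grid_coeff b N j n = (if b then cos else sin) (2 * pi * (real n * (real j / real (N ^ 3))))"

definition deviation_event :: "nat \<Rightarrow> nat \<Rightarrow> (nat \<Rightarrow> real) \<Rightarrow> 'a set" where
  "deviation_event N m a = {\<omega>\<in>space M. threshold N \<le> \<bar>\<Sum>n\<in>{1..N}. a n * Z m n \<omega>\<bar>}"

definition bad_event :: "nat \<Rightarrow> 'a set" where
  "bad_event N = (\<Union>(m, j, b) \<in> {1..N} \<times> {..N ^ 3} \<times> UNIV. deviation_event N m (grid_coeff b N j))"

lemma deviation_event_sets:
  assumes "m \<ge> 1"
  shows "deviation_event N m a \<in> events"
proof -
  have [measurable]: "n \<in> {1..N} \<Longrightarrow> Z m n \<in> borel_measurable M" for n
    using assms by (intro rv) auto
  show ?thesis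
    unfolding deviation_event_def by measurable
qed

lemma bad_event_sets: "bad_event N \<in> events"
  unfolding bad_event_def by (intro sets.finite_UN) (auto intro: deviation_event_sets)

text \<open>Choosing \<open>l = \<surd>(9 ln N / R N)\<close> in the tail bound gives probability \<open>2 exp(-9 ln N)\<close>.\<close>
lemma prob_deviation_event:
  assumes m: "m \<ge> 1" and weights: "\<And>n. \<bar>a n\<bar> \<le> 1"
    and N: "N \<ge> 3" and large: "9 * ln (real N) \<le> (\<Sum>n=1..N. \<rho> n)"
  shows "prob (deviation_event N m a) \<le> 2 / real N ^ 9"
proof -
  define L R where "L = ln (real N)" and "R = (\<Sum>n=1..N. \<rho> n)"
  have L: "L > 0"
    unfolding L_def using N by simp
  with large have R: "R > 0" "9 * L \<le> R"
    unfolding L_def R_def by auto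
  define l where "l = sqrt (9 * L / R)"
  have l: "0 < l" "l \<le> 1"
    unfolding l_def using L R by auto
  have indep_N: "indep_vars (\<lambda>_. borel) (Z m) {1..N}"
    by (rule indep_vars_subset[OF indep[OF m]]) auto
  have "prob (deviation_event N m a) \<le> 2 * exp (l\<^sup>2 * (\<Sum>n\<in>{1..N}. \<rho> n) - l * threshold N)"
    unfolding deviation_event_def
    by (rule abs_weighted_sum_tail[OF _ indep_N]) (use bounded centered var weights m l in auto)
  also have "l\<^sup>2 * (\<Sum>n\<in>{1..N}. \<rho> n) - l * threshold N = - 9 * L"
  proof -
    have "l\<^sup>2 * R = 9 * L"
      unfolding l_def using L R by simp
    moreover have "l * threshold N = 6 * sqrt (9 * L / R * (L * R))"
      unfolding l_def threshold_def L_def[symmetric] R_def[symmetric]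
      by (simp only: real_sqrt_mult mult_ac)
    moreover have "sqrt (9 * L / R * (L * R)) = 3 * L"
      using R L by (simp add: real_sqrt_mult)
    ultimately show ?thesis
      unfolding R_def by simp
  qed
  also have "exp (- 9 * L) = 1 / real N ^ 9"
  proof -
    have "exp (real 9 * L) = real N ^ 9"
      unfolding exp_of_nat_mult L_def using N by simp
    then show ?thesis
      by (simp add: exp_minus field_simps)
  qed
  finally show ?thesis
    by simp
qed

text \<open>Union bound over \<open>2N(N\<^sup>3 + 1)\<close> deviation events; the result is summable in \<open>N\<close>.\<close>
lemma prob_bad_event:
  assumes N: "N \<ge> 3" and large: "9 * ln (real N) \<le> (\<Sum>n=1..N. \<rho> n)"
  shows "prob (bad_event N) \<le> 8 / real N ^ 2"
proof -
  let ?I = "{1..N} \<times> {..N ^ 3} \<times> (UNIV :: bool set)"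
  define D where "D = (\<lambda>(m, j, b). deviation_event N m (grid_coeff b N j))"
  have "prob (bad_event N) \<le> (\<Sum>i\<in>?I. prob (D i))"
    unfolding bad_event_def D_def[symmetric]
    by (rule finite_measure_subadditive_finite) (auto simp: D_def intro: deviation_event_sets)
  also have "\<dots> \<le> real (card ?I) * (2 / real N ^ 9)"
    by (rule sum_bounded_above)
       (auto simp: D_def grid_coeff_def intro!: prob_deviation_event N large)
  also have "real (card ?I) = 2 * (real N * (real N ^ 3 + 1))"
    by (simp add: card_cartesian_product algebra_simps)
  also have "2 * (real N * (real N ^ 3 + 1)) * (2 / real N ^ 9) \<le> 8 / real N ^ 2"
  proof -
    define r where "r = real N"
    have r: "r \<ge> 1"
      unfolding r_def using N by simp
    have "2 * (r * (r ^ 3 + 1)) * (2 / r ^ 9) \<le> 2 * (r * (2 * r ^ 3)) * (2 / r ^ 9)"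
      using r by (intro mult_right_mono mult_left_mono) (auto simp: one_le_power)
    also have "\<dots> = 8 / r ^ 5"
      using r by (simp add: field_simps flip: power_add power_Suc)
    also have "\<dots> \<le> 8 / r ^ 2"
      using r by (intro divide_left_mono power_increasing) auto
    finally show ?thesis
      unfolding r_def .
  qed
  finally show ?thesis .
qed

lemma AE_eventually_good:
  assumes large: "eventually (\<lambda>N. N \<ge> 3 \<and> 9 * ln (real N) \<le> (\<Sum>n=1..N. \<rho> n)) sequentially"
  shows "AE \<omega> in M. eventually (\<lambda>N. \<omega> \<in> space M - bad_event N) sequentially"
proof (rule borel_cantelli_AE1[OF bad_event_sets])
  show "summable (\<lambda>N. prob (bad_event N))"
    using large prob_bad_event
    by (intro summable_comparison_test_ev[OF _ summable_mult[OF inverse_power_summable[of 2], of 8]])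
       (auto elim!: eventually_mono simp: divide_inverse)
qed (simp add: emeasure_eq_measure)

lemma good_event_bound:
  assumes N: "N \<ge> 3" and large: "9 * ln (real N) \<le> (\<Sum>n=1..N. \<rho> n)"
    and \<omega>: "\<omega> \<in> space M - bad_event N" and m: "m \<in> {1..N}" and t: "t \<in> {0..1}"
  shows "norm (trig_poly (\<lambda>n. Z m n \<omega>) N t) \<le> 19 * sqrt (ln (real N) * (\<Sum>n=1..N. \<rho> n))"
proof -
  let ?s = "sqrt (ln (real N) * (\<Sum>n=1..N. \<rho> n))"
  have coeff: "\<bar>Z m n \<omega>\<bar> \<le> 1" if "n \<in> {1..N}" for n
    using bounded m that \<omega> by auto
  have grid: "\<bar>\<Sum>n\<in>{1..N}. Z m n \<omega> * grid_coeff b N j n\<bar> \<le> threshold N" if "j \<le> N ^ 3" for j b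
  proof -
    have "\<omega> \<notin> deviation_event N m (grid_coeff b N j)"
      using \<omega> m that unfolding bad_event_def by blast
    then show ?thesis
      using \<omega> unfolding deviation_event_def by (auto simp: mult.commute)
  qed
  have "norm (trig_poly (\<lambda>n. Z m n \<omega>) N t) \<le> 2 * threshold N + 2 * pi * real N ^ 2 / real (N ^ 3)"
    using N grid[of _ True] grid[of _ False]
    by (intro trig_poly_bound_from_grid[OF coeff _ _ t]) (auto simp: grid_coeff_def)
  also have "2 * pi * real N ^ 2 / real (N ^ 3) \<le> 7 * ?s"
  proof -
    have "1 \<le> ln (real N)"
      using N exp_le by (simp add: ln_ge_iff)
    moreover from this large have "1 \<le> (\<Sum>n=1..N. \<rho> n)"
      by linarith
    ultimately have "1 \<le> ?s"
      using mult_mono[of 1 "ln (real N)" 1 "\<Sum>n=1..N. \<rho> n"] by simp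
    moreover have "2 * pi * real N ^ 2 / real (N ^ 3) = 2 * pi / real N"
      using N by (simp add: field_simps eval_nat_numeral)
    moreover have "2 * pi / real N \<le> 7"
      using N pi_less_4 by (simp add: divide_simps)
    ultimately show ?thesis
      by linarith
  qed
  finally show ?thesis
    by (simp add: threshold_def)
qed

end

theorem lemma3p3:
  fixes M :: "'a measure" and Z :: "nat \<Rightarrow> nat \<Rightarrow> 'a \<Rightarrow> real" and \<rho> :: "nat \<Rightarrow> real"
  assumes "prob_space M"
    and rv: "\<And>m n. m \<ge> 1 \<Longrightarrow> n \<ge> 1 \<Longrightarrow> Z m n \<in> borel_measurable M"
    and bdd: "\<And>m n \<omega>. m \<ge> 1 \<Longrightarrow> n \<ge> 1 \<Longrightarrow> \<omega> \<in> space M \<Longrightarrow> \<bar>Z m n \<omega>\<bar> \<le> 1"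
    and mean0: "\<And>m n. m \<ge> 1 \<Longrightarrow> n \<ge> 1 \<Longrightarrow> prob_space.expectation M (Z m n) = 0"
    and indep: "\<And>m. m \<ge> 1 \<Longrightarrow> prob_space.indep_vars M (\<lambda>_. borel) (\<lambda>n. Z m n) {1..}"
    and rho_pos: "\<And>n. n \<ge> 1 \<Longrightarrow> \<rho> n > 0"
    and var: "\<And>m n. m \<ge> 1 \<Longrightarrow> n \<ge> 1 \<Longrightarrow> prob_space.variance M (Z m n) \<le> \<rho> n"
    and growth: "filterlim (\<lambda>N. (\<Sum>n=1..N. \<rho> n) / ln (real N)) at_top at_top"
  shows "AE \<omega> in M. \<exists>C. \<forall>N\<ge>2. \<forall>m\<in>{1..N}. \<forall>t\<in>{0..1::real}.
           norm (\<Sum>n=1..N. complex_of_real (Z m n \<omega>) * e (real n * t))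
             \<le> C * sqrt (ln (real N) * (\<Sum>n=1..N. \<rho> n))"
proof -
  interpret bounded_centered_rows M Z \<rho>
    using assms(1) rv bdd mean0 indep var
    by (simp add: bounded_centered_rows_def bounded_centered_rows_axioms_def)
  let ?R = "\<lambda>N. \<Sum>n=1..N. \<rho> n"
  have large: "eventually (\<lambda>N. N \<ge> 3 \<and> 9 * ln (real N) \<le> ?R N) sequentially"
  proof -
    have "eventually (\<lambda>N. 9 \<le> ?R N / ln (real N)) sequentially"
      using growth unfolding filterlim_at_top by blast
    then show ?thesis
      using eventually_ge_at_top[of 3]
      by eventually_elim (simp add: pos_le_divide_eq)
  qed
  have "AE \<omega> in M. eventually (\<lambda>N. \<omega> \<in> space M - bad_event N) sequentially"
    using large by (rule AE_eventually_good)
  then show ?thesis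
  proof (rule AE_mp[OF _ AE_I2], intro impI)
    fix \<omega> assume \<omega>: "\<omega> \<in> space M"
      and good: "eventually (\<lambda>N. \<omega> \<in> space M - bad_event N) sequentially"
    from large good have "eventually (\<lambda>N. \<forall>i\<in>{1..N} \<times> {0..1}.
        norm (trig_poly (\<lambda>n. Z (fst i) n \<omega>) N (snd i)) \<le> 19 * sqrt (ln (real N) * ?R N)) sequentially"
      by eventually_elim (use good_event_bound in \<open>auto simp: mem_Times_iff\<close>)
    then have "\<exists>C. \<forall>N\<ge>2. \<forall>i\<in>{1..N} \<times> {0..1}.
        norm (trig_poly (\<lambda>n. Z (fst i) n \<omega>) N (snd i)) \<le> C * sqrt (ln (real N) * ?R N)"
      by (rule uniform_bound_from_eventual[where B=real])
         (use \<omega> in \<open>auto intro!: trig_poly_norm_le mult_pos_pos sum_pos rho_pos bounded\<close>)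
    then show "\<exists>C. \<forall>N\<ge>2. \<forall>m\<in>{1..N}. \<forall>t\<in>{0..1::real}.
        norm (\<Sum>n=1..N. complex_of_real (Z m n \<omega>) * e (real n * t)) \<le> C * sqrt (ln (real N) * ?R N)"
      by (auto simp: trig_poly_def)
  qed
qed

end
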